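(* Let $C\subseteq\mathbb{F}^n$ be an $[n,k]$ linear code with full support, and let $T=\boldsymbol{\alpha}^1|\mathfrak{s}_1\otimes\cdots\otimes\boldsymbol{\alpha}^k|\mathfrak{s}_k$ be a minimal linear trellis for $C$. Let $\boldsymbol{\beta}^1,\dots,\boldsymbol{\beta}^k\in C$ be such that $\mathfrak{s}_i$ is a minimal span of $\boldsymbol{\beta}^i$ for every $i$. Then $\boldsymbol{\beta}^1,\dots,\boldsymbol{\beta}^k$ is a basis of $C$, and consequently $T'=\boldsymbol{\beta}^1|\mathfrak{s}_1\otimes\cdots\otimes\boldsymbol{\beta}^k|\mathfrak{s}_k$ is also a minimal linear trellis for $C$.
   Context: Let $\mathbb{F}$ be a finite field and $n\ge1$; indices are taken in $\mathbb{Z}_n$. A trellis $T$ of length $n$ over $\mathbb{F}$ consists of pairwise disjoint finite vertex sets $V_i(T)$, $i\in\mathbb{Z}_n$, and edge sets $E_i(T)\subseteq V_i(T)\times\mathbb{F}\times V_{i+1}(T)$. Trellises are trim. $T$ is linear if each $V_i(T)$ is an $\mathbb{F}$-vector space and each $E_i(T)$ a subspace. $C(T)$ is the set of label sequences of closed paths of length $n$ starting in $V_0(T)$. $T'$ is smaller than $T$ if $|V_i(T')|\le|V_i(T)|$ for all $i$ with some strict inequality; a minimal linear trellis for $C$ is a linear trellis $T$ with $C(T)=C$ such that no linear trellis $T'$ with $C(T')=C$ is smaller than $T$. Spans: for $a\in\mathbb{Z}_n$, $0\le l\le n-1$, $[a,a+l]=\{a,\dots,a+l\}\subseteq\mathbb{Z}_n$,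 $(a,a+l]=[a,a+l]\setminus\{a\}$; $(a,l)$ is a span; degenerate spans $\emptyset$ (length $-1$) and $\mathbb{Z}_n$ (length $n$, written $(a,n)$). Partial order: $(a_1,l_1)\le(a_2,l_2)$ iff ($l_1\le l_2<n-1$ and $[a_1,a_1+l_1]\subseteq[a_2,a_2+l_2]$) or ($l_2=n-1$ and $(a_1,a_1+l_1]\subseteq(a_2,a_2+l_2]$) or $l_1=-1$ or $l_2=n$. A vector $\boldsymbol{\alpha}\in\mathbb{F}^n$ has span $(a,l)$, $0\le l\le n-1$, if its support lies in $[a,a+l]$; $\emptyset$ is a span only of $\mathbf{0}$ and $\mathbb{Z}_n$ of every vector. A minimal span of $\boldsymbol{\alpha}$ is a span $\mathfrak{s}$ of $\boldsymbol{\alpha}$ such that no span $\mathfrak{s}'\lneq\mathfrak{s}$ is a span of $\boldsymbol{\alpha}$. Elementary trellis $\boldsymbol{\alpha}|(a,l)$ ($\boldsymbol{\alpha}$ of span $(a,l)$, $0\le l\le n$): $V_i=\mathbb{F}$ for $i\in(a,a+l]$ (all $i$ if $l=n$), $V_i=0$ otherwise, $E_i=\langle(u_i,\alpha_i,u_{i+1})\rangle$ with $u_i=1$ if $i\in(a,a+l]$, else $0$. The product $T\otimes T'$ has $V_i=V_i(T)\times V_i(T')$ and $E_i=\{((v,v'),\alpha+\alpha',(w,w')):(v,\alpha,w)\in E_i(T),(v',\alpha',w')\in E_i(T')\}$; it satisfies $C(T\otimes T')=C(T)+C(T')$. *)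

theory Defs
  imports Main "HOL.Vector_Spaces" "HOL-Library.Function_Algebras" "HOL-Library.Product_Plus"
begin

(* Vectors of F^n are functions nat => 'f vanishing outside {0..<n};
   indices of Z_n are 0..<n, successor of i is Suc i mod n. *)

definition fvecs :: "nat \<Rightarrow> (nat \<Rightarrow> 'f::zero) set" where
  "fvecs n = {v. \<forall>i\<ge>n. v i = 0}"

definition fscale :: "'f::field \<Rightarrow> (nat \<Rightarrow> 'f) \<Rightarrow> (nat \<Rightarrow> 'f)" where
  "fscale c v = (\<lambda>m. c * v m)"

definition escale :: "'f::field \<Rightarrow> (nat \<Rightarrow> 'f) \<times> 'f \<times> (nat \<Rightarrow> 'f)
    \<Rightarrow> (nat \<Rightarrow> 'f) \<times> 'f \<times> (nat \<Rightarrow> 'f)" where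
  "escale c e = (case e of (v, x, w) \<Rightarrow> (fscale c v, c * x, fscale c w))"

(* Trellis: vertex sets V_i and edge sets E_i, i \<in> Z_n = {0..<n}.
   Vertices of every trellis are taken in the ambient space nat => 'f
   (every finite F-vector space embeds there). *)
record 'f trellis =
  TV :: "nat \<Rightarrow> (nat \<Rightarrow> 'f) set"
  TE :: "nat \<Rightarrow> ((nat \<Rightarrow> 'f) \<times> 'f \<times> (nat \<Rightarrow> 'f)) set"

definition valid_trellis :: "nat \<Rightarrow> 'f trellis \<Rightarrow> bool" where
  "valid_trellis n T \<longleftrightarrow> (\<forall>i<n. finite (TV T i) \<and>
      TE T i \<subseteq> TV T i \<times> UNIV \<times> TV T (Suc i mod n))"

definition closed_path :: "nat \<Rightarrow> 'f trellis \<Rightarrow> (nat \<Rightarrow> nat \<Rightarrow> 'f) \<Rightarrow> (nat \<Rightarrow> 'f) \<Rightarrow> bool" where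
  "closed_path n T v a \<longleftrightarrow> (\<forall>i<n. (v i, a i, v (Suc i mod n)) \<in> TE T i)"

definition code :: "nat \<Rightarrow> 'f::zero trellis \<Rightarrow> (nat \<Rightarrow> 'f) set" where
  "code n T = {a \<in> fvecs n. \<exists>v. closed_path n T v a}"

definition trim :: "nat \<Rightarrow> 'f trellis \<Rightarrow> bool" where
  "trim n T \<longleftrightarrow> (\<forall>i<n.
      (\<forall>x\<in>TV T i. \<exists>v a. closed_path n T v a \<and> v i = x) \<and>
      (\<forall>e\<in>TE T i. \<exists>v a. closed_path n T v a \<and> (v i, a i, v (Suc i mod n)) = e))"

definition linear_trellis :: "nat \<Rightarrow> 'f::field trellis \<Rightarrow> bool" where
  "linear_trellis n T \<longleftrightarrow> valid_trellis n T \<and>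
     (\<forall>i<n. module.subspace fscale (TV T i) \<and> module.subspace escale (TE T i))"

definition smaller :: "nat \<Rightarrow> 'f trellis \<Rightarrow> 'f trellis \<Rightarrow> bool" where
  "smaller n T' T \<longleftrightarrow> (\<forall>i<n. card (TV T' i) \<le> card (TV T i)) \<and>
                       (\<exists>i<n. card (TV T' i) < card (TV T i))"

(* all trellises are trim (standing assumption) *)
definition minimal_linear_trellis :: "nat \<Rightarrow> (nat \<Rightarrow> 'f::field) set \<Rightarrow> 'f trellis \<Rightarrow> bool" where
  "minimal_linear_trellis n C T \<longleftrightarrow> linear_trellis n T \<and> trim n T \<and> code n T = C \<and>
     \<not> (\<exists>T'. linear_trellis n T' \<and> trim n T' \<and> code n T' = C \<and> smaller n T' T)"

(* Spans: a pair (a, l) with a \<in> Z_n and -1 \<le> l \<le> n; l = -1 is the empty span,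
   l = n is Z_n. *)
definition is_span :: "nat \<Rightarrow> nat \<times> int \<Rightarrow> bool" where
  "is_span n s \<longleftrightarrow> fst s < n \<and> -1 \<le> snd s \<and> snd s \<le> int n"

definition cinterval :: "nat \<Rightarrow> nat \<Rightarrow> nat \<Rightarrow> nat set" where
  "cinterval n a l = {(a + j) mod n | j. j \<le> l}"

definition ointerval :: "nat \<Rightarrow> nat \<Rightarrow> nat \<Rightarrow> nat set" where
  "ointerval n a l = {(a + j) mod n | j. 1 \<le> j \<and> j \<le> l}"

definition span_le :: "nat \<Rightarrow> nat \<times> int \<Rightarrow> nat \<times> int \<Rightarrow> bool" where
  "span_le n s1 s2 \<longleftrightarrow> (case s1 of (a1, l1) \<Rightarrow> case s2 of (a2, l2) \<Rightarrow>
      (0 \<le> l1 \<and> l1 \<le> l2 \<and> l2 < int n - 1 \<and>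
         cinterval n a1 (nat l1) \<subseteq> cinterval n a2 (nat l2)) \<or>
      (l2 = int n - 1 \<and> 0 \<le> l1 \<and> l1 \<le> int n - 1 \<and>
         ointerval n a1 (nat l1) \<subseteq> ointerval n a2 (nat l2)) \<or>
      l1 = -1 \<or> l2 = int n)"

definition has_span :: "nat \<Rightarrow> (nat \<Rightarrow> 'f::zero) \<Rightarrow> nat \<times> int \<Rightarrow> bool" where
  "has_span n v s \<longleftrightarrow> (case s of (a, l) \<Rightarrow>
      (if l = -1 then (\<forall>i<n. v i = 0)
       else if l = int n then True
       else (\<forall>i<n. v i \<noteq> 0 \<longrightarrow> i \<in> cinterval n a (nat l))))"

definition minimal_span :: "nat \<Rightarrow> (nat \<Rightarrow> 'f::zero) \<Rightarrow> nat \<times> int \<Rightarrow> bool" where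
  "minimal_span n v s \<longleftrightarrow> is_span n s \<and> has_span n v s \<and>
     \<not> (\<exists>s'. is_span n s' \<and> has_span n v s' \<and> span_le n s' s \<and> \<not> span_le n s s')"

(* Elementary trellis v|(a,l), 0 \<le> l \<le> n; the vertex space F is encoded as
   functions supported at coordinate 0. *)
definition active :: "nat \<Rightarrow> nat \<times> int \<Rightarrow> nat \<Rightarrow> bool" where
  "active n s i \<longleftrightarrow> (case s of (a, l) \<Rightarrow>
      (if l = int n then True else i \<in> ointerval n a (nat l)))"

definition evert :: "bool \<Rightarrow> 'f::zero \<Rightarrow> nat \<Rightarrow> 'f" where
  "evert b c = (\<lambda>m. if m = 0 \<and> b then c else 0)"

definition elementary :: "nat \<Rightarrow> (nat \<Rightarrow> 'f::field) \<Rightarrow> nat \<times> int \<Rightarrow> 'f trellis" where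
  "elementary n v s = \<lparr> TV = (\<lambda>i. {evert (active n s i) c | c. True}),
     TE = (\<lambda>i. {(evert (active n s i) c, c * v i, evert (active n s (Suc i mod n)) c) | c. True}) \<rparr>"

(* product of trellises; pairs of vertices are encoded injectively by interleaving *)
definition interleave :: "(nat \<Rightarrow> 'f) \<Rightarrow> (nat \<Rightarrow> 'f) \<Rightarrow> nat \<Rightarrow> 'f" where
  "interleave v w = (\<lambda>m. if even m then v (m div 2) else w (m div 2))"

definition tprod :: "'f::plus trellis \<Rightarrow> 'f trellis \<Rightarrow> 'f trellis" where
  "tprod T T' = \<lparr> TV = (\<lambda>i. {interleave v v' | v v'. v \<in> TV T i \<and> v' \<in> TV T' i}),
     TE = (\<lambda>i. {(interleave v v', x + x', interleave w w') | v x w v' x' w'.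
                 (v, x, w) \<in> TE T i \<and> (v', x', w') \<in> TE T' i}) \<rparr>"

fun tprods :: "'f::{plus,zero} trellis list \<Rightarrow> 'f trellis" where
  "tprods [] = \<lparr> TV = (\<lambda>i. {0}), TE = (\<lambda>i. {(0, 0, 0)}) \<rparr>"
| "tprods [T] = T"
| "tprods (T # Ts) = tprod T (tprods Ts)"

end

theory Submission
  imports Defs
begin

text \<open>
  Write \<open>T\<^sub>\<beta>\<close> for the product of the elementary trellises \<open>\<beta> j | s j\<close>. Its code is the span of
  the \<open>\<beta> j\<close>, and its vertex counts depend only on the spans \<open>s\<close>, so whenever the \<open>\<beta> j\<close>
  span \<open>C\<close>, the trellis \<open>T\<^sub>\<beta>\<close> is as small as \<open>T\<^sub>\<alpha>\<close> and hence minimal.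

  To see that the \<open>\<beta> j\<close> span \<open>C\<close>, exchange the \<open>\<alpha> j\<close> for the \<open>\<beta> j\<close> one at a time,
  keeping a basis of \<open>C\<close> whose \<open>j\<close>-th vector has span \<open>s j = (a, l)\<close>. If \<open>\<beta> j\<close> lay in the
  span of the other basis vectors, subtracting a multiple of \<open>\<beta> j\<close> from the \<open>j\<close>-th vector
  would clear its entry at \<open>a\<close> (which is nonzero in \<open>\<beta> j\<close> by minimality of its span) and
  leave a basis in which that vector has the shorter span \<open>(a + 1, l - 1)\<close>; the resulting
  product trellis for \<open>C\<close> would be strictly smaller than \<open>T\<^sub>\<alpha>\<close> at vertex \<open>a + 1\<close>.
\<close>

interpretation V: vector_space "fscale :: 'f::field \<Rightarrow> (nat \<Rightarrow> 'f) \<Rightarrow> _"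
  by unfold_locales (auto simp: fscale_def algebra_simps)

lemma module_escale: "module (escale :: 'f::field \<Rightarrow> _)"
  by unfold_locales (auto simp: escale_def fscale_def algebra_simps split: prod.splits)

lemma subspace_fscale_iff:
  "V.subspace S \<longleftrightarrow>
     0 \<in> S \<and> (\<forall>x\<in>S. \<forall>y\<in>S. x + y \<in> S) \<and> (\<forall>c. \<forall>x\<in>S. fscale c x \<in> S)"
  by (simp add: V.subspace_def)

lemma subspace_escale_iff:
  "module.subspace escale S \<longleftrightarrow>
     0 \<in> S \<and> (\<forall>x\<in>S. \<forall>y\<in>S. x + y \<in> S) \<and> (\<forall>c. \<forall>x\<in>S. escale c x \<in> S)"
  by (simp add: module.subspace_def[OF module_escale])

lemma interleave_eq_iff: "interleave v v' = interleave w w' \<longleftrightarrow> v = w \<and> v' = w'"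
proof
  assume h: "interleave v v' = interleave w w'"
  have "v m = w m \<and> v' m = w' m" for m
    using fun_cong[OF h, of "2*m"] fun_cong[OF h, of "2*m+1"] by (simp add: interleave_def)
  then show "v = w \<and> v' = w'" by auto
qed simp

lemma interleave_add: "interleave v v' + interleave w w' = interleave (v + w) (v' + w')"
  by (auto simp: interleave_def)

lemma interleave_fscale: "fscale c (interleave v v') = interleave (fscale c v) (fscale c v')"
  by (auto simp: interleave_def fscale_def)

lemma interleave_zero: "interleave 0 0 = 0"
  by (auto simp: interleave_def)

lemma evert_add: "evert b (c::'f::monoid_add) + evert b d = evert b (c + d)"
  by (auto simp: evert_def)

lemma evert_fscale: "fscale e (evert b c) = evert b (e * c)"
  by (auto simp: evert_def fscale_def)

lemma evert_zero: "evert b 0 = 0"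
  by (auto simp: evert_def)

definition linear_trim :: "nat \<Rightarrow> 'f::field trellis \<Rightarrow> bool" where
  "linear_trim n T \<longleftrightarrow> linear_trellis n T \<and> trim n T"

lemma TV_elementary: "TV (elementary n g s) i = range (evert (active n s i))"
  by (auto simp: elementary_def)

lemma TE_elementary:
  "TE (elementary n g s) i =
     range (\<lambda>c. (evert (active n s i) c, c * g i, evert (active n s (Suc i mod n)) c))"
  by (auto simp: elementary_def)

lemma closed_path_elementary:
  "closed_path n (elementary n g s) (\<lambda>i. evert (active n s i) c) (\<lambda>i. c * g i)"
  by (auto simp: closed_path_def elementary_def)

lemma linear_trim_elementary: "linear_trim n (elementary n (g :: nat \<Rightarrow> 'f::{finite,field}) s)"
proof -
  let ?T = "elementary n g s"
  have valid: "valid_trellis n ?T"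
    by (auto simp: valid_trellis_def TV_elementary TE_elementary)
  have "V.subspace (TV ?T i)" for i
    unfolding subspace_fscale_iff TV_elementary
    by (auto simp: evert_add evert_fscale) (metis evert_zero rangeI)
  moreover have "module.subspace escale (TE ?T i)" for i
    unfolding subspace_escale_iff TE_elementary
  proof (intro conjI ballI allI)
    show "0 \<in> range (\<lambda>c. (evert (active n s i) c, c * g i, evert (active n s (Suc i mod n)) c))"
      by (auto simp: zero_prod_def evert_zero intro!: image_eqI[of _ _ 0])
  qed (auto simp: evert_add escale_def evert_fscale mult.assoc
             intro: image_eqI[of _ _ "_ + _"] image_eqI[of _ _ "_ * _"] simp flip: distrib_right)
  moreover have "trim n ?T"
    unfolding trim_def TV_elementary TE_elementary using closed_path_elementary by blast
  ultimately show ?thesis using valid by (simp add: linear_trim_def linear_trellis_def)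
qed

lemma TV_tprod: "TV (tprod T1 T2) i = (\<lambda>(v, v'). interleave v v') ` (TV T1 i \<times> TV T2 i)"
  by (auto simp: tprod_def)

lemma closed_path_tprod:
  assumes "closed_path n T1 p1 a1" and "closed_path n T2 p2 a2"
  shows "closed_path n (tprod T1 T2) (\<lambda>i. interleave (p1 i) (p2 i)) (a1 + a2)"
  using assms unfolding closed_path_def tprod_def by fastforce

lemma subspace_TV_tprod:
  assumes "V.subspace (TV T1 i)" and "V.subspace (TV T2 i)"
  shows "V.subspace (TV (tprod T1 T2) i)"
  using assms unfolding subspace_fscale_iff
  apply (simp add: tprod_def)
  apply (intro conjI)
    apply (metis interleave_zero)
   apply (metis interleave_add)
  apply (metis interleave_fscale)
  done

lemma subspace_TE_tprod:
  fixes T1 T2 :: "'f::field trellis"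
  assumes sub1: "module.subspace escale (TE T1 i)" and sub2: "module.subspace escale (TE T2 i)"
  shows "module.subspace escale (TE (tprod T1 T2) i)"
  unfolding subspace_escale_iff
proof (intro conjI ballI allI)
  have "(0, 0, 0) \<in> TE T1 i" "(0, 0, 0) \<in> TE T2 i"
    using sub1 sub2 by (simp_all add: subspace_escale_iff zero_prod_def)
  then show "0 \<in> TE (tprod T1 T2) i"
    by (simp add: tprod_def zero_prod_def) (metis add_0 interleave_zero)
next
  fix x y assume "x \<in> TE (tprod T1 T2) i" "y \<in> TE (tprod T1 T2) i"
  then obtain v1 x1 w1 v1' x1' w1' v2 x2 w2 v2' x2' w2' where
    x: "x = (interleave v1 v1', x1 + x1', interleave w1 w1')"
       "(v1, x1, w1) \<in> TE T1 i" "(v1', x1', w1') \<in> TE T2 i"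
    and y: "y = (interleave v2 v2', x2 + x2', interleave w2 w2')"
       "(v2, x2, w2) \<in> TE T1 i" "(v2', x2', w2') \<in> TE T2 i"
    by (auto simp: tprod_def)
  have "(v1, x1, w1) + (v2, x2, w2) \<in> TE T1 i" "(v1', x1', w1') + (v2', x2', w2') \<in> TE T2 i"
    using sub1 sub2 x y unfolding subspace_escale_iff by blast+
  moreover have "x + y = (interleave (v1 + v2) (v1' + v2'), (x1 + x2) + (x1' + x2'),
                          interleave (w1 + w2) (w1' + w2'))"
    using x y by (simp add: interleave_add algebra_simps)
  ultimately show "x + y \<in> TE (tprod T1 T2) i" by (simp add: tprod_def) blast
next
  fix c x assume "x \<in> TE (tprod T1 T2) i"
  then obtain v x1 w v' x1' w' where
    x: "x = (interleave v v', x1 + x1', interleave w w')"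
       "(v, x1, w) \<in> TE T1 i" "(v', x1', w') \<in> TE T2 i"
    by (auto simp: tprod_def)
  have "escale c (v, x1, w) \<in> TE T1 i" "escale c (v', x1', w') \<in> TE T2 i"
    using sub1 sub2 x unfolding subspace_escale_iff by blast+
  moreover have "escale c x = (interleave (fscale c v) (fscale c v'), c * x1 + c * x1',
                               interleave (fscale c w) (fscale c w'))"
    using x by (simp add: escale_def interleave_fscale algebra_simps)
  ultimately show "escale c x \<in> TE (tprod T1 T2) i" by (simp add: tprod_def escale_def) blast
qed

lemma trim_tprod:
  assumes tr1: "trim n T1" and tr2: "trim n T2"
  shows "trim n (tprod T1 T2)"
  unfolding trim_def
proof (intro allI impI conjI ballI)
  fix i x assume i: "i < n" and "x \<in> TV (tprod T1 T2) i"
  then obtain v v' where x: "x = interleave v v'" "v \<in> TV T1 i" "v' \<in> TV T2 i"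
    by (auto simp: tprod_def)
  obtain p1 a1 where "closed_path n T1 p1 a1" "p1 i = v" using tr1 i x unfolding trim_def by blast
  moreover obtain p2 a2 where "closed_path n T2 p2 a2" "p2 i = v'"
    using tr2 i x unfolding trim_def by blast
  ultimately show "\<exists>v a. closed_path n (tprod T1 T2) v a \<and> v i = x"
    using closed_path_tprod x by blast
next
  fix i e assume i: "i < n" and "e \<in> TE (tprod T1 T2) i"
  then obtain v x w v' x' w' where
    e: "e = (interleave v v', x + x', interleave w w')"
       "(v, x, w) \<in> TE T1 i" "(v', x', w') \<in> TE T2 i"
    by (auto simp: tprod_def)
  obtain p1 a1 where "closed_path n T1 p1 a1" "(p1 i, a1 i, p1 (Suc i mod n)) = (v, x, w)"
    using tr1 i e unfolding trim_def by blast
  moreover obtain p2 a2 where "closed_path n T2 p2 a2" "(p2 i, a2 i, p2 (Suc i mod n)) = (v', x', w')"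
    using tr2 i e unfolding trim_def by blast
  ultimately show "\<exists>v a. closed_path n (tprod T1 T2) v a \<and> (v i, a i, v (Suc i mod n)) = e"
    using closed_path_tprod e by fastforce
qed

lemma linear_trim_tprod:
  assumes T1: "linear_trim n T1" and T2: "linear_trim n T2"
  shows "linear_trim n (tprod T1 T2)"
proof -
  have "valid_trellis n (tprod T1 T2)"
    using T1 T2 unfolding linear_trim_def linear_trellis_def valid_trellis_def
    by (auto simp: TV_tprod) (auto simp: tprod_def dest!: subsetD)
  then show ?thesis
    using T1 T2 by (simp add: linear_trim_def linear_trellis_def subspace_TV_tprod
        subspace_TE_tprod trim_tprod)
qed

lemma linear_trim_tprods:
  "(\<And>T. T \<in> set Ts \<Longrightarrow> linear_trim n T) \<Longrightarrow> linear_trim n (tprods Ts :: 'f::field trellis)"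
proof (induction Ts rule: tprods.induct)
  case 1
  have "closed_path n (tprods [] :: 'f trellis) (\<lambda>i. 0) (\<lambda>i. 0)"
    by (simp add: closed_path_def)
  then show ?case
    unfolding linear_trim_def linear_trellis_def valid_trellis_def subspace_fscale_iff
      subspace_escale_iff trim_def
    by (auto simp: escale_def fscale_def zero_prod_def zero_fun_def)
qed (simp_all add: linear_trim_tprod)

lemma interleave_components:
  "interleave v v' = X \<Longrightarrow> v = (\<lambda>m. X (2 * m)) \<and> v' = (\<lambda>m. X (2 * m + 1))"
  by (auto simp: interleave_def)

lemma closed_path_tprod_split:
  assumes P: "closed_path n (tprod T1 T2) P a"
  obtains a1 a2 where "\<forall>i<n. a i = a1 i + a2 i"
    and "closed_path n T1 (\<lambda>i m. P i (2 * m)) a1" and "closed_path n T2 (\<lambda>i m. P i (2 * m + 1)) a2"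
proof -
  define p1 where "p1 i = (\<lambda>m. P i (2 * m))" for i
  define p2 where "p2 i = (\<lambda>m. P i (2 * m + 1))" for i
  have "\<forall>i. i < n \<longrightarrow> (\<exists>x x'. a i = x + x' \<and> (p1 i, x, p1 (Suc i mod n)) \<in> TE T1 i
                  \<and> (p2 i, x', p2 (Suc i mod n)) \<in> TE T2 i)"
  proof (intro allI impI)
    fix i assume "i < n"
    then obtain v x w v' x' w' where e: "P i = interleave v v'" "a i = x + x'"
      "P (Suc i mod n) = interleave w w'" "(v, x, w) \<in> TE T1 i" "(v', x', w') \<in> TE T2 i"
      using P unfolding closed_path_def tprod_def by fastforce
    from interleave_components[OF e(1)[symmetric]] interleave_components[OF e(3)[symmetric]]
    have "v = p1 i" "v' = p2 i" "w = p1 (Suc i mod n)" "w' = p2 (Suc i mod n)"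
      by (auto simp: p1_def p2_def)
    then show "\<exists>x x'. a i = x + x' \<and> (p1 i, x, p1 (Suc i mod n)) \<in> TE T1 i
                  \<and> (p2 i, x', p2 (Suc i mod n)) \<in> TE T2 i" using e by blast
  qed
  then obtain a1 a2 where "\<And>i. i < n \<Longrightarrow> a i = a1 i + a2 i
      \<and> (p1 i, a1 i, p1 (Suc i mod n)) \<in> TE T1 i \<and> (p2 i, a2 i, p2 (Suc i mod n)) \<in> TE T2 i"
    by metis
  then show ?thesis using that unfolding closed_path_def p1_def p2_def by blast
qed

lemma code_tprod:
  "code n (tprod T1 T2) = {a + b | a b. a \<in> code n T1 \<and> b \<in> code n (T2 :: 'f::monoid_add trellis)}"
proof (intro equalityI subsetI)
  fix a assume "a \<in> code n (tprod T1 T2)"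
  then obtain P where a: "a \<in> fvecs n" and P: "closed_path n (tprod T1 T2) P a"
    by (auto simp: code_def)
  obtain a1 a2 where a_sum: "\<forall>i<n. a i = a1 i + a2 i"
    and path1: "closed_path n T1 (\<lambda>i m. P i (2 * m)) a1"
    and path2: "closed_path n T2 (\<lambda>i m. P i (2 * m + 1)) a2"
    using closed_path_tprod_split[OF P] .
  \<comment> \<open>only the labels at \<open>0..<n\<close> matter for a closed path, so they may be truncated to \<open>fvecs n\<close>\<close>
  define b1 where "b1 i = (if i < n then a1 i else 0)" for i
  define b2 where "b2 i = (if i < n then a2 i else 0)" for i
  have "b1 \<in> code n T1" using path1 unfolding code_def fvecs_def closed_path_def b1_def by auto
  moreover have "b2 \<in> code n T2" using path2 unfolding code_def fvecs_def closed_path_def b2_def by auto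
  moreover have "a = b1 + b2"
  proof
    fix m show "a m = (b1 + b2) m"
      using a_sum a by (cases "m < n") (auto simp: b1_def b2_def fvecs_def)
  qed
  ultimately show "a \<in> {a + b | a b. a \<in> code n T1 \<and> b \<in> code n T2}" by blast
next
  fix c assume "c \<in> {a + b | a b. a \<in> code n T1 \<and> b \<in> code n T2}"
  then obtain a b p q where c: "c = a + b" "a \<in> fvecs n" "b \<in> fvecs n"
    "closed_path n T1 p a" "closed_path n T2 q b"
    by (auto simp: code_def)
  then have "closed_path n (tprod T1 T2) (\<lambda>i. interleave (p i) (q i)) c"
    by (simp add: closed_path_tprod)
  moreover have "c \<in> fvecs n" using c by (auto simp: fvecs_def)
  ultimately show "c \<in> code n (tprod T1 T2)" by (auto simp: code_def)
qed

lemma code_tprods_Nil: "code n (tprods [] :: 'f::{plus,zero} trellis) = {0}"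
proof -
  have "x = 0" if "\<forall>i\<ge>n. x i = 0" "\<forall>i<n. x i = 0" for x :: "nat \<Rightarrow> 'f"
  proof
    fix m show "x m = 0 m" using that by (cases "m < n") auto
  qed
  then show ?thesis by (auto simp: code_def closed_path_def fvecs_def)
qed

lemma cinterval_full:
  assumes "a < n" "i < n" shows "i \<in> cinterval n a (n - 1)"
proof -
  define j where "j = (i + n - a) mod n"
  have "j \<le> n - 1" using assms by (simp add: j_def less_Suc_eq_le[symmetric])
  moreover have "(a + j) mod n = (a + (i + n - a)) mod n" by (simp add: j_def mod_add_right_eq)
  then have "(a + j) mod n = i" using assms by simp
  ultimately show ?thesis unfolding cinterval_def by blast
qed

lemma has_span_support:
  assumes "has_span n v (a, l)" and "a < n" and "0 \<le> l" "l \<le> int n"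
    and "i < n" and "v i \<noteq> 0"
  shows "i \<in> cinterval n a (nat l)"
proof (cases "l = int n")
  case True
  obtain j where "i = (a + j) mod n" "j \<le> n - 1"
    using cinterval_full[OF assms(2,5)] by (auto simp: cinterval_def)
  then show ?thesis using True unfolding cinterval_def by auto
next
  case False
  then show ?thesis using assms by (simp add: has_span_def)
qed

lemma active_ointerval: "i \<in> ointerval n a (nat l) \<Longrightarrow> active n (a, l) i"
  by (simp add: active_def)

lemma code_elementary:
  assumes n: "n \<ge> 1" and g: "g \<in> fvecs n" and g_span: "has_span n g (a, l)"
    and a: "a < n" and l: "0 \<le> l" "l \<le> int n"
  shows "code n (elementary n (g :: nat \<Rightarrow> 'f::field) (a, l)) = V.span {g}"
proof (intro equalityI subsetI)
  fix x assume "x \<in> V.span {g}"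
  then obtain c where x: "x = fscale c g" by (auto simp: V.span_singleton)
  then have "x \<in> fvecs n" using g by (auto simp: fvecs_def fscale_def)
  moreover have "closed_path n (elementary n g (a, l)) (\<lambda>i. evert (active n (a, l) i) c) x"
    using closed_path_elementary[of n g "(a, l)" c] by (simp add: x fscale_def)
  ultimately show "x \<in> code n (elementary n g (a, l))" by (auto simp: code_def)
next
  let ?act = "active n (a, l)"
  fix x assume "x \<in> code n (elementary n g (a, l))"
  then obtain P where x: "x \<in> fvecs n" and P: "closed_path n (elementary n g (a, l)) P x"
    by (auto simp: code_def)
  have "\<forall>i<n. \<exists>c. P i = evert (?act i) c \<and> x i = c * g i
      \<and> P (Suc i mod n) = evert (?act (Suc i mod n)) c"
    using P by (auto simp: closed_path_def TE_elementary)
  then obtain c where c: "\<And>i. i < n \<Longrightarrow> P i = evert (?act i) (c i) \<and> x i = c i * g i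
      \<and> P (Suc i mod n) = evert (?act (Suc i mod n)) (c i)"
    by metis
  \<comment> \<open>an active vertex carries the edge scalar over to the next edge\<close>
  have c_const: "c ((a + j) mod n) = c a" if "j \<le> nat l" for j
    using that
  proof (induction j)
    case (Suc j)
    let ?i = "(a + j) mod n" and ?i' = "(a + Suc j) mod n"
    have next_i: "Suc ?i mod n = ?i'" by (simp add: mod_Suc_eq)
    have "?i' \<in> ointerval n a (nat l)"
      unfolding ointerval_def using Suc.prems by (intro CollectI exI[of _ "Suc j"]) simp
    then have act: "?act ?i'" by (rule active_ointerval)
    have "P ?i' 0 = c ?i" using c[of ?i] act next_i n by (simp add: evert_def)
    moreover have "P ?i' 0 = c ?i'" using c[of ?i'] act n by (simp add: evert_def)
    ultimately show ?case using Suc by simp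
  qed (use a in simp)
  have x_multiple: "x i = c a * g i" if i: "i < n" for i
  proof (cases "g i = 0")
    case False
    then obtain j where "i = (a + j) mod n" "j \<le> nat l"
      using has_span_support[OF g_span a l i] by (auto simp: cinterval_def)
    then show ?thesis using c[OF i] c_const by simp
  next
    case True
    then show ?thesis using c[OF i] by simp
  qed
  have "x = fscale (c a) g"
  proof
    fix m show "x m = fscale (c a) g m"
      using x_multiple x g by (cases "m < n") (auto simp: fscale_def fvecs_def)
  qed
  then show "x \<in> V.span {g}" by (auto simp: V.span_singleton)
qed

definition elementary_product ::
    "nat \<Rightarrow> (nat \<Rightarrow> nat \<Rightarrow> 'f::field) \<Rightarrow> (nat \<Rightarrow> nat \<times> int) \<Rightarrow> nat list \<Rightarrow> 'f trellis" where
  "elementary_product n g s js = tprods (map (\<lambda>j. elementary n (g j) (s j)) js)"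

lemma elementary_product_Cons:
  "elementary_product n g s (j # js) =
     (if js = [] then elementary n (g j) (s j)
      else tprod (elementary n (g j) (s j)) (elementary_product n g s js))"
  by (cases js) (simp_all add: elementary_product_def)

lemma linear_trim_elementary_product:
  "linear_trim n (elementary_product n (g :: nat \<Rightarrow> nat \<Rightarrow> 'f::{finite,field}) s js)"
  unfolding elementary_product_def by (rule linear_trim_tprods) (auto intro: linear_trim_elementary)

lemma code_elementary_product:
  assumes n: "n \<ge> 1"
    and spans: "\<forall>j\<in>set js. g j \<in> fvecs n \<and> is_span n (s j) \<and> 0 \<le> snd (s j) \<and> has_span n (g j) (s j)"
  shows "code n (elementary_product n (g :: nat \<Rightarrow> nat \<Rightarrow> 'f::field) s js) = V.span (g ` set js)"
  using spans
proof (induction js)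
  case Nil
  show ?case using code_tprods_Nil[of n, where 'f='f] by (simp add: elementary_product_def)
next
  case (Cons j js)
  obtain a l where "s j = (a, l)" by fastforce
  then have code_j: "code n (elementary n (g j) (s j)) = V.span {g j}"
    using code_elementary[OF n] Cons.prems by (auto simp: is_span_def)
  show ?case
  proof (cases "js = []")
    case False
    then show ?thesis using Cons V.span_Un[of "{g j}" "g ` set js"]
      by (simp add: elementary_product_Cons code_tprod code_j)
  qed (simp add: elementary_product_Cons code_j)
qed

section \<open>Vertex counts\<close>

lemma card_TV_elementary:
  "card (TV (elementary n (g :: nat \<Rightarrow> 'f::{finite,field}) s) i) =
     (if active n s i then card (UNIV :: 'f set) else 1)"
proof (cases "active n s i")
  case True
  have "inj (evert True :: 'f \<Rightarrow> _)"
    by (rule injI) (metis evert_def)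
  then show ?thesis using True by (simp add: TV_elementary card_image)
next
  case False
  have "range (evert False :: 'f \<Rightarrow> _) = {0}" by (auto simp: evert_def zero_fun_def)
  then show ?thesis using False by (simp add: TV_elementary)
qed

lemma card_TV_tprod: "card (TV (tprod T1 T2) i) = card (TV T1 i) * card (TV T2 i)"
proof -
  have "inj_on (\<lambda>(v, v'). interleave v v') (TV T1 i \<times> TV T2 i)"
    by (auto simp: inj_on_def interleave_eq_iff)
  then show ?thesis by (simp add: TV_tprod card_image card_cartesian_product)
qed

lemma card_TV_elementary_product:
  "card (TV (elementary_product n (g :: nat \<Rightarrow> nat \<Rightarrow> 'f::{finite,field}) s js) i) =
     card (UNIV :: 'f set) ^ length (filter (\<lambda>j. active n (s j) i) js)"
proof (induction js)
  case Nil
  then show ?case by (simp add: elementary_product_def)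
next
  case (Cons j js)
  then show ?case
    by (cases "js = []") (simp_all add: elementary_product_Cons card_TV_tprod card_TV_elementary)
qed

section \<open>Shortening spans\<close>

lemma ointerval_Suc_subset:
  assumes "1 \<le> l" shows "ointerval n (Suc a mod n) (l - 1) \<subseteq> ointerval n a l"
proof
  fix x assume "x \<in> ointerval n (Suc a mod n) (l - 1)"
  then obtain j where "x = (Suc a mod n + j) mod n" "1 \<le> j" "j \<le> l - 1"
    by (auto simp: ointerval_def)
  then have "x = (a + Suc j) mod n" "1 \<le> Suc j" "Suc j \<le> l"
    using assms by (auto simp: mod_add_left_eq)
  then show "x \<in> ointerval n a l" unfolding ointerval_def by blast
qed

lemma cinterval_Suc_subset:
  assumes "1 \<le> l" shows "cinterval n (Suc a mod n) (l - 1) \<subseteq> cinterval n a l"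
proof
  fix x assume "x \<in> cinterval n (Suc a mod n) (l - 1)"
  then obtain j where "x = (Suc a mod n + j) mod n" "j \<le> l - 1" by (auto simp: cinterval_def)
  then have "x = (a + Suc j) mod n" "Suc j \<le> l" using assms by (auto simp: mod_add_left_eq)
  then show "x \<in> cinterval n a l" unfolding cinterval_def by blast
qed

lemma Suc_mod_in_ointerval: "1 \<le> l \<Longrightarrow> Suc a mod n \<in> ointerval n a l"
  unfolding ointerval_def by (intro CollectI exI[of _ 1]) simp

lemma Suc_mod_notin_ointerval:
  assumes "l < n" shows "Suc a mod n \<notin> ointerval n (Suc a mod n) (l - 1)"
proof
  define x where "x = Suc a mod n"
  assume "x \<in> ointerval n x (l - 1)"
  then obtain j where "x = (x + j) mod n" "1 \<le> j" "j \<le> l - 1"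
    unfolding ointerval_def by blast
  then have j: "(x + j) mod n = x" "1 \<le> j" "j \<le> l - 1" by simp_all
  have x: "x < n" and j_lt: "j < n" using assms j by (simp_all add: x_def)
  show False
  proof (cases "x + j < n")
    case True then show ?thesis using j by simp
  next
    case False
    then have "(x + j) mod n = x + j - n" using x j_lt by (simp add: mod_if)
    then show ?thesis using False j_lt j by simp
  qed
qed

lemma has_span_Suc:
  assumes span: "has_span n v (a, l)" and l: "1 \<le> l" "l \<le> int n - 1" and a: "a < n"
    and va: "v a = 0"
  shows "has_span n v (Suc a mod n, l - 1)"
proof -
  have "i \<in> cinterval n (Suc a mod n) (nat (l - 1))" if i: "i < n" "v i \<noteq> 0" for i
  proof -
    obtain j where j: "i = (a + j) mod n" "j \<le> nat l"
      using span l i by (auto simp: has_span_def cinterval_def)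
    then obtain j' where "j = Suc j'" using va a i by (cases j) auto
    then have "i = (Suc a mod n + j') mod n" "j' \<le> nat (l - 1)"
      using j by (auto simp: mod_add_left_eq)
    then show ?thesis unfolding cinterval_def by blast
  qed
  then show ?thesis using l by (simp add: has_span_def)
qed

lemma has_span_0_eq_0:
  "has_span n v (a, 0) \<Longrightarrow> a < n \<Longrightarrow> v a = 0 \<Longrightarrow> i < n \<Longrightarrow> v i = 0"
  by (auto simp: has_span_def cinterval_def)

lemma has_span_diff_fscale:
  "has_span n u (a, l) \<Longrightarrow> has_span n v (a, l) \<Longrightarrow> has_span n (u - fscale c v) (a, l)"
  by (auto simp: has_span_def fscale_def) (metis mult_zero_right)

lemma minimal_span_not_full:
  assumes n: "n \<ge> 1" and min: "minimal_span n v (a, l)"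
  shows "l \<le> int n - 1"
proof (rule ccontr)
  assume "\<not> l \<le> int n - 1"
  then have l: "l = int n" using min by (auto simp: minimal_span_def is_span_def)
  have a: "a < n" using min by (auto simp: minimal_span_def is_span_def)
  have "has_span n v (a, int n - 1)"
    using n a cinterval_full[OF a] by (auto simp: has_span_def nat_diff_distrib)
  moreover have "is_span n (a, int n - 1)" "span_le n (a, int n - 1) (a, l)"
    "\<not> span_le n (a, l) (a, int n - 1)"
    using a n l by (simp_all add: is_span_def span_le_def)
  ultimately show False using min unfolding minimal_span_def by blast
qed

lemma minimal_span_start_nonzero:
  assumes n: "n \<ge> 1" and min: "minimal_span n v (a, l)" and l0: "0 \<le> l"
  shows "v a \<noteq> 0"
proof
  assume va: "v a = 0"
  have a: "a < n" and span: "has_span n v (a, l)"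
    using min by (auto simp: minimal_span_def is_span_def)
  have l_le: "l \<le> int n - 1" using minimal_span_not_full[OF n min] .
  \<comment> \<open>a strictly smaller span of \<open>v\<close>: the empty one, or the one starting one step later\<close>
  obtain s' where "is_span n s'" "has_span n v s'" "span_le n s' (a, l)" "\<not> span_le n (a, l) s'"
  proof (cases "l = 0")
    case True
    then have "has_span n v (a, -1)"
      using has_span_0_eq_0[of n v a] span a va by (simp add: has_span_def)
    then show thesis
      using that[of "(a, -1)"] a n True by (simp add: is_span_def span_le_def)
  next
    case False
    then have l1: "1 \<le> l" using l0 by simp
    have "span_le n (Suc a mod n, l - 1) (a, l)"
    proof (cases "l < int n - 1")
      case True
      then show ?thesis using cinterval_Suc_subset[of "nat l" n a] l1
        by (simp add: span_le_def nat_diff_distrib)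
    next
      case False
      then have "l = int n - 1" using l_le by simp
      moreover have "ointerval n (Suc a mod n) (nat (l - 1)) \<subseteq> ointerval n a (nat l)"
        using ointerval_Suc_subset[of "nat l" n a] l1 by (simp add: nat_diff_distrib)
      ultimately show ?thesis using l1 by (simp add: span_le_def)
    qed
    moreover have "\<not> span_le n (a, l) (Suc a mod n, l - 1)" using l_le l1 by (auto simp: span_le_def)
    moreover have "is_span n (Suc a mod n, l - 1)" using n l1 l_le by (simp add: is_span_def)
    ultimately show thesis using that has_span_Suc[OF span l1 l_le a va] by blast
  qed
  then show False using min unfolding minimal_span_def by blast
qed

lemma card_UNIV_field_gt_1: "card (UNIV :: 'f::{finite,field} set) > 1"
proof -
  have "card {0, 1::'f} \<le> card (UNIV :: 'f set)" by (rule card_mono) simp_all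
  then show ?thesis by simp
qed

lemma length_filter_mono:
  "\<forall>x\<in>set xs. P x \<longrightarrow> Q x \<Longrightarrow> length (filter P xs) \<le> length (filter Q xs)"
  by (induction xs) auto

lemma length_filter_strict_mono:
  assumes "\<forall>x\<in>set xs. P x \<longrightarrow> Q x" and "x \<in> set xs" "Q x" "\<not> P x"
  shows "length (filter P xs) < length (filter Q xs)"
  using assms
proof (induction xs)
  case (Cons y xs)
  then show ?case using length_filter_mono[of xs P Q] by auto
qed simp

lemma smaller_shorten_span:
  fixes g h :: "nat \<Rightarrow> nat \<Rightarrow> 'f::{finite,field}"
  assumes j: "j < k" and s_j: "s j = (a, l)" and a: "a < n" and l: "1 \<le> l" "l \<le> int n - 1"
  shows "smaller n (elementary_product n g (s(j := (Suc a mod n, l - 1))) [0..<k])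
                   (elementary_product n h s [0..<k])"
proof -
  let ?s' = "s(j := (Suc a mod n, l - 1))"
  have "ointerval n (Suc a mod n) (nat l - 1) \<subseteq> ointerval n a (nat l)"
    using l by (intro ointerval_Suc_subset) simp
  then have active_s': "active n (?s' m) i \<Longrightarrow> active n (s m) i" for m i
    using l s_j by (cases "m = j") (auto simp: active_def nat_diff_distrib)
  have "active n (s j) (Suc a mod n)" "\<not> active n (?s' j) (Suc a mod n)"
    using Suc_mod_in_ointerval[of "nat l" a n] Suc_mod_notin_ointerval[of "nat l" n a] l s_j
    by (auto simp: active_def nat_diff_distrib)
  then have fewer: "length (filter (\<lambda>m. active n (?s' m) (Suc a mod n)) [0..<k])
                  < length (filter (\<lambda>m. active n (s m) (Suc a mod n)) [0..<k])"
    using j active_s' by (intro length_filter_strict_mono[of _ _ _ j]) auto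
  have not_more: "length (filter (\<lambda>m. active n (?s' m) i) [0..<k])
                   \<le> length (filter (\<lambda>m. active n (s m) i) [0..<k])" for i
    using active_s' by (intro length_filter_mono) simp
  have q: "1 < card (UNIV :: 'f set)" by (rule card_UNIV_field_gt_1)
  show ?thesis
    unfolding smaller_def card_TV_elementary_product
  proof (intro conjI allI impI)
    show "\<exists>i<n. card (UNIV :: 'f set) ^ length (filter (\<lambda>m. active n (?s' m) i) [0..<k])
                < card (UNIV :: 'f set) ^ length (filter (\<lambda>m. active n (s m) i) [0..<k])"
      using a fewer q by (intro exI[of _ "Suc a mod n"] conjI power_strict_increasing) simp_all
  qed (use not_more q in \<open>simp add: power_increasing\<close>)
qed

section \<open>The exchange argument\<close>

lemma (in vector_space) spanning_family_of_dim_card: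
  assumes V: "V \<subseteq> span (f ` A)" and A: "finite A" and dim: "dim V = card A"
  shows "inj_on f A \<and> independent (f ` A)"
proof
  have "card A \<le> card (f ` A)" using dim_le_card[OF V] A dim by simp
  then show inj: "inj_on f A" using A by (intro eq_card_imp_inj_on) (simp_all add: card_image_le le_antisym)
  show "independent (f ` A)"
  proof
    assume "dependent (f ` A)"
    then obtain x where x: "x \<in> f ` A" "x \<in> span (f ` A - {x})" unfolding dependent_def by blast
    have "f ` A \<subseteq> span (f ` A - {x})"
    proof
      fix y assume "y \<in> f ` A"
      then show "y \<in> span (f ` A - {x})" using x(2) span_base[of y] by (cases "y = x") auto
    qed
    then have "V \<subseteq> span (f ` A - {x})" using V span_minimal[OF _ subspace_span] by (meson subset_trans)
    then have "dim V \<le> card (f ` A - {x})" using A by (intro dim_le_card) simp_all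
    also have "\<dots> < card (f ` A)" using A x(1) by (intro psubset_card_mono) auto
    also have "\<dots> = card A" using inj by (rule card_image)
    finally show False using dim by simp
  qed
qed

lemma (in module) span_fun_upd_eq:
  assumes j: "j \<in> A" and x: "x \<in> span (f ` A)" and fj: "f j \<in> span (insert x (f ` (A - {j})))"
  shows "span (f(j := x) ` A) = span (f ` A)"
proof -
  have "f(j := x) ` A = insert x (f ` (A - {j}))" using j by (auto simp: fun_upd_image)
  moreover have "insert x (f ` (A - {j})) \<subseteq> span (f ` A)"
    using x span_superset[of "f ` A"] by blast
  moreover have "f ` A \<subseteq> span (insert x (f ` (A - {j})))"
    using fj span_superset[of "insert x (f ` (A - {j}))"] by blast
  ultimately show ?thesis by (simp add: span_eq)
qed

locale minimal_elementary_product =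
  fixes C :: "(nat \<Rightarrow> 'f::{finite,field}) set"
    and n k :: nat
    and \<alpha> :: "nat \<Rightarrow> nat \<Rightarrow> 'f"
    and s :: "nat \<Rightarrow> nat \<times> int"
  assumes n: "n \<ge> 1"
    and C_vecs: "C \<subseteq> fvecs n"
    and C_subspace: "V.subspace C"
    and C_dim: "V.dim C = k"
    and \<alpha>_spans: "\<forall>j<k. \<alpha> j \<in> fvecs n \<and> is_span n (s j) \<and> 0 \<le> snd (s j) \<and> has_span n (\<alpha> j) (s j)"
    and minimal: "minimal_linear_trellis n C (elementary_product n \<alpha> s [0..<k])"
begin

definition adapted :: "(nat \<Rightarrow> nat \<Rightarrow> 'f) \<Rightarrow> bool" where
  "adapted B \<longleftrightarrow> (\<forall>j<k. B j \<in> C \<and> has_span n (B j) (s j)) \<and> V.span (B ` {..<k}) = C"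

lemma adapted_\<alpha>: "adapted \<alpha>"
proof -
  have "code n (elementary_product n \<alpha> s [0..<k]) = V.span (\<alpha> ` set [0..<k])"
    using \<alpha>_spans by (intro code_elementary_product[OF n]) simp
  also have "set [0..<k] = {..<k}" by auto
  finally have "V.span (\<alpha> ` {..<k}) = C"
    using minimal by (simp add: minimal_linear_trellis_def)
  then show ?thesis
    using \<alpha>_spans V.span_base[of _ "\<alpha> ` {..<k}"] by (auto simp: adapted_def)
qed

lemma adapted_basis:
  assumes "adapted B" shows "inj_on B {..<k} \<and> V.independent (B ` {..<k})"
  using assms C_dim by (intro V.spanning_family_of_dim_card) (simp_all add: adapted_def)

lemma adapted_not_in_span_others:
  assumes B: "adapted B" and j: "j < k" shows "B j \<notin> V.span (B ` ({..<k} - {j}))"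
proof -
  have inj: "inj_on B {..<k}" and indep: "V.independent (B ` {..<k})"
    using adapted_basis[OF B] by auto
  have "B ` ({..<k} - {j}) = B ` {..<k} - {B j}"
    using inj j by (simp add: inj_on_image_set_diff)
  then show ?thesis using indep j unfolding V.dependent_def by auto
qed

lemma not_smaller_than_minimal:
  assumes B: "\<forall>m<k. B m \<in> C \<and> is_span n (s' m) \<and> 0 \<le> snd (s' m) \<and> has_span n (B m) (s' m)"
    and span: "V.span (B ` {..<k}) = C"
  shows "\<not> smaller n (elementary_product n B s' [0..<k]) (elementary_product n \<alpha> s [0..<k])"
proof -
  have "code n (elementary_product n B s' [0..<k]) = V.span (B ` set [0..<k])"
    using B C_vecs by (intro code_elementary_product[OF n]) auto
  also have "set [0..<k] = {..<k}" by auto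
  finally have "code n (elementary_product n B s' [0..<k]) = C" using span by simp
  then show ?thesis
    using minimal linear_trim_elementary_product[of n B s' "[0..<k]"]
    by (auto simp: minimal_linear_trellis_def linear_trim_def)
qed

lemma minimal_span_not_in_span_others:
  assumes B: "adapted B" and j: "j < k" and b: "b \<in> C" and b_min: "minimal_span n b (s j)"
  shows "b \<notin> V.span (B ` ({..<k} - {j}))"
proof
  let ?H = "V.span (B ` ({..<k} - {j}))"
  assume b_H: "b \<in> ?H"
  obtain a l where s_j: "s j = (a, l)" by fastforce
  have a: "a < n" and l0: "0 \<le> l" using \<alpha>_spans j s_j by (auto simp: is_span_def)
  have l_le: "l \<le> int n - 1" using minimal_span_not_full[OF n] b_min s_j by simp
  have b_a: "b a \<noteq> 0" using minimal_span_start_nonzero[OF n] b_min s_j l0 by simp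
  have B_C: "\<And>m. m < k \<Longrightarrow> B m \<in> C" and B_spans: "\<And>m. m < k \<Longrightarrow> has_span n (B m) (s m)"
    and B_span: "V.span (B ` {..<k}) = C" using B by (auto simp: adapted_def)
  \<comment> \<open>clearing the first entry of \<open>B j\<close> with \<open>b\<close> gives a vector of shorter span\<close>
  define c where "c = B j a / b a"
  define \<gamma> where "\<gamma> = B j - fscale c b"
  have \<gamma>_a: "\<gamma> a = 0" using b_a by (simp add: \<gamma>_def c_def fscale_def)
  have \<gamma>_C: "\<gamma> \<in> C"
    using C_subspace B_C[OF j] b unfolding \<gamma>_def by (metis V.span_diff V.span_eq_iff V.span_scale)
  have \<gamma>_span: "has_span n \<gamma> (a, l)"
    unfolding \<gamma>_def using B_spans[OF j] b_min s_j
    by (intro has_span_diff_fscale) (simp_all add: minimal_span_def)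
  have B_j: "B j = \<gamma> + fscale c b" by (simp add: \<gamma>_def)
  show False
  proof (cases "l = 0")
    case True
    have "\<gamma> i = 0" for i
      using has_span_0_eq_0[of n \<gamma> a, OF _ a \<gamma>_a] \<gamma>_span True \<gamma>_C C_vecs
      by (cases "i < n") (auto simp: fvecs_def)
    then have "\<gamma> = 0" by (simp add: fun_eq_iff)
    then have "B j \<in> ?H" using b_H by (simp add: B_j V.span_scale)
    then show False using adapted_not_in_span_others[OF B j] by simp
  next
    case False
    then have l1: "1 \<le> l" using l0 by simp
    define t where "t = (Suc a mod n, l - 1)"
    have "b \<in> V.span (insert \<gamma> (B ` ({..<k} - {j})))"
      using b_H V.span_mono[of "B ` ({..<k} - {j})"] by blast
    then have "B j \<in> V.span (insert \<gamma> (B ` ({..<k} - {j})))"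
      unfolding B_j by (intro V.span_add V.span_scale) (simp_all add: V.span_base)
    then have span_\<gamma>: "V.span (B(j := \<gamma>) ` {..<k}) = C"
      using j \<gamma>_C B_span by (subst V.span_fun_upd_eq) auto
    have spans_\<gamma>: "\<forall>m<k. (B(j := \<gamma>)) m \<in> C \<and> is_span n ((s(j := t)) m)
        \<and> 0 \<le> snd ((s(j := t)) m) \<and> has_span n ((B(j := \<gamma>)) m) ((s(j := t)) m)"
      using \<alpha>_spans B_C B_spans \<gamma>_C has_span_Suc[OF \<gamma>_span l1 l_le a \<gamma>_a] n l1 l_le
      by (auto simp: t_def is_span_def)
    show False
      using not_smaller_than_minimal[OF spans_\<gamma> span_\<gamma>]
        smaller_shorten_span[of j k s, OF j s_j a l1 l_le]
      unfolding t_def by blast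
  qed
qed

lemma adapted_fun_upd:
  assumes B: "adapted B" and j: "j < k" and b: "b \<in> C" and b_min: "minimal_span n b (s j)"
  shows "adapted (B(j := b))"
proof -
  let ?S = "B ` ({..<k} - {j})"
  have B_span: "V.span (B ` {..<k}) = C" using B by (simp add: adapted_def)
  have "B ` {..<k} = insert (B j) ?S" using j by auto
  then have "b \<in> V.span (insert (B j) ?S)" using b B_span by simp
  then have "B j \<in> V.span (insert b ?S)"
    using minimal_span_not_in_span_others[OF assms] by (rule V.in_span_insert)
  then have "V.span (B(j := b) ` {..<k}) = C"
    using j b B_span by (subst V.span_fun_upd_eq) auto
  then show ?thesis using B b b_min by (auto simp: adapted_def minimal_span_def)
qed

lemma adapted_if_minimal_spans:
  assumes \<beta>: "\<forall>j<k. \<beta> j \<in> C \<and> minimal_span n (\<beta> j) (s j)"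
  shows "adapted \<beta>"
proof -
  have "adapted (\<lambda>m. if m < p then \<beta> m else \<alpha> m)" if "p \<le> k" for p
    using that
  proof (induction p)
    case 0
    then show ?case using adapted_\<alpha> by simp
  next
    case (Suc p)
    have "(\<lambda>m. if m < Suc p then \<beta> m else \<alpha> m) = (\<lambda>m. if m < p then \<beta> m else \<alpha> m)(p := \<beta> p)"
      by (auto simp: fun_eq_iff)
    then show ?case using Suc \<beta> by (simp add: adapted_fun_upd)
  qed
  then have "adapted (\<lambda>m. if m < k then \<beta> m else \<alpha> m)" by simp
  then show ?thesis by (simp add: adapted_def)
qed

lemma minimal_if_adapted:
  assumes B: "adapted B"
  shows "minimal_linear_trellis n C (elementary_product n B s [0..<k])"
proof -
  have "code n (elementary_product n B s [0..<k]) = V.span (B ` set [0..<k])"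
    using B \<alpha>_spans C_vecs by (intro code_elementary_product[OF n]) (auto simp: adapted_def)
  also have "set [0..<k] = {..<k}" by auto
  finally have "code n (elementary_product n B s [0..<k]) = C" using B by (simp add: adapted_def)
  moreover have "card (TV (elementary_product n B s [0..<k]) i) =
                 card (TV (elementary_product n \<alpha> s [0..<k]) i)" for i
    by (simp add: card_TV_elementary_product)
  ultimately show ?thesis
    using minimal linear_trim_elementary_product[of n B s "[0..<k]"]
    by (simp add: minimal_linear_trellis_def linear_trim_def smaller_def)
qed

end

theorem mainTheorem16:
  fixes C :: "(nat \<Rightarrow> 'f::{finite,field}) set"
    and n k :: nat
    and \<alpha> \<beta> :: "nat \<Rightarrow> nat \<Rightarrow> 'f"
    and s :: "nat \<Rightarrow> nat \<times> int"
  assumes n: "n \<ge> 1"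
    and C_vecs: "C \<subseteq> fvecs n"
    and C_lin: "module.subspace fscale C"
    and C_dim: "vector_space.dim fscale C = k"
    and C_supp: "\<forall>i<n. \<exists>c\<in>C. c i \<noteq> 0"
    and \<alpha>_spans: "\<forall>j<k. \<alpha> j \<in> fvecs n \<and> is_span n (s j) \<and> 0 \<le> snd (s j)
                        \<and> has_span n (\<alpha> j) (s j)"
    and T_min: "minimal_linear_trellis n C (tprods (map (\<lambda>j. elementary n (\<alpha> j) (s j)) [0..<k]))"
    and \<beta>: "\<forall>j<k. \<beta> j \<in> C \<and> minimal_span n (\<beta> j) (s j)"
  shows "(inj_on \<beta> {..<k} \<and> module.independent fscale (\<beta> ` {..<k})
           \<and> module.span fscale (\<beta> ` {..<k}) = C)
         \<and> minimal_linear_trellis n C (tprods (map (\<lambda>j. elementary n (\<beta> j) (s j)) [0..<k]))"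
proof -
  interpret minimal_elementary_product C n k \<alpha> s
    using n C_vecs C_lin C_dim \<alpha>_spans T_min
    by unfold_locales (simp_all add: elementary_product_def)
  have "adapted \<beta>" using \<beta> by (rule adapted_if_minimal_spans)
  then show ?thesis
    using adapted_basis minimal_if_adapted by (simp add: adapted_def elementary_product_def)
qed

end
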